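(* The $\mathbb Z\mathcal I$-modules $V_o$, $\wedge^2\mathbb Z^{\mathcal K}$, $E_o=\wedge^2 V_o$, $W_o$ and $\wedge^2 W_o$ are all principal, i.e., each is generated as a $\mathbb Z\mathcal I$-module by a single element.
   Context: $\mathcal I\subset\mathrm{SO}(3)$ is the rotation group of a regular dodecahedron $D$ ($\mathcal I\cong A_5$). $\mathcal K$ is the 5-element set of cubes inscribed in $D$, on which $\mathcal I$ acts as the group of even permutations; $\mathcal L$ is the 6-element set of pairs of opposite faces of $D$, with its natural (transitive) $\mathcal I$-action. $\mathbb Z^{\mathcal K}$ and $\mathbb Z^{\mathcal L}$ are the corresponding permutation modules. $V_o:=\mathbb Z^{\mathcal K}/\mathbb Z(\sum_{e\in\mathcal K}e)$, $W_o:=\mathbb Z^{\mathcal L}/\mathbb Z(\sum_{l\in\mathcal L}l)$, $E_o:=\wedge^2V_o$. *)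

theory Defs
  imports "HOL-Combinatorics.Permutations"
begin

text \<open>The 5 cubes inscribed in D are labelled 0..4; I acts on them as the group of
  even permutations, so we take I to be A5 acting on {0..<5}.\<close>

definition cubes :: "nat set" where
  "cubes = {0..<5}"

definition Ico :: "(nat \<Rightarrow> nat) set" where
  "Ico = {p. p permutes cubes \<and> evenperm p}"

definition act_K :: "(nat \<Rightarrow> nat) \<Rightarrow> nat \<Rightarrow> nat" where
  "act_K p k = p k"

text \<open>Pairs of opposite faces of D correspond I-equivariantly to the axes through
  face centres, hence to the cyclic subgroups of order 5 of I (rotations about that
  axis).\<close>

definition faces :: "(nat \<Rightarrow> nat) set set" where
  "faces = {H. H \<subseteq> Ico \<and> card H = 5 \<and> id \<in> H \<and> (\<forall>a\<in>H. \<forall>b\<in>H. a \<circ> b \<in> H)}"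

definition act_L :: "(nat \<Rightarrow> nat) \<Rightarrow> (nat \<Rightarrow> nat) set \<Rightarrow> (nat \<Rightarrow> nat) set" where
  "act_L p H = (\<lambda>h. p \<circ> h \<circ> inv p) ` H"

inductive_set zspan :: "('x \<Rightarrow> int) set \<Rightarrow> ('x \<Rightarrow> int) set" for S where
  zero: "(\<lambda>_. 0) \<in> zspan S"
| gen: "v \<in> S \<Longrightarrow> v \<in> zspan S"
| add: "a \<in> zspan S \<Longrightarrow> b \<in> zspan S \<Longrightarrow> (\<lambda>x. a x + b x) \<in> zspan S"
| neg: "a \<in> zspan S \<Longrightarrow> (\<lambda>x. - a x) \<in> zspan S"

definition permmod :: "'x set \<Rightarrow> ('x \<Rightarrow> int) set" where
  "permmod X = {f. \<forall>x. x \<notin> X \<longrightarrow> f x = 0}"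

definition pm_act :: "'x set \<Rightarrow> ((nat \<Rightarrow> nat) \<Rightarrow> 'x \<Rightarrow> 'x) \<Rightarrow> (nat \<Rightarrow> nat) \<Rightarrow> ('x \<Rightarrow> int) \<Rightarrow> ('x \<Rightarrow> int)" where
  "pm_act X act g f = (\<lambda>x. if x \<in> X then f (act (inv g) x) else 0)"

definition sumvec :: "'x set \<Rightarrow> 'x \<Rightarrow> int" where
  "sumvec X = (\<lambda>x. if x \<in> X then 1 else 0)"

text \<open>Exterior square of the free module Z^X: f \<and> g is realised as the alternating
  function (x,y) |-> f x * g y - f y * g x on X \<times> X (i.e. e_x \<and> e_y corresponds to
  delta_(x,y) - delta_(y,x)); wedge2 X is the span of all f \<and> g.\<close>
definition wedge :: "'x set \<Rightarrow> ('x \<Rightarrow> int) \<Rightarrow> ('x \<Rightarrow> int) \<Rightarrow> ('x \<times> 'x \<Rightarrow> int)" where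
  "wedge X f g = (\<lambda>(x, y). if x \<in> X \<and> y \<in> X then f x * g y - f y * g x else 0)"

definition wedge2 :: "'x set \<Rightarrow> ('x \<times> 'x \<Rightarrow> int) set" where
  "wedge2 X = zspan {wedge X f g | f g. f \<in> permmod X \<and> g \<in> permmod X}"

definition w2_act :: "'x set \<Rightarrow> ((nat \<Rightarrow> nat) \<Rightarrow> 'x \<Rightarrow> 'x) \<Rightarrow> (nat \<Rightarrow> nat) \<Rightarrow> ('x \<times> 'x \<Rightarrow> int) \<Rightarrow> ('x \<times> 'x \<Rightarrow> int)" where
  "w2_act X act g a = (\<lambda>(x, y). if x \<in> X \<and> y \<in> X then a (act (inv g) x, act (inv g) y) else 0)"

text \<open>Principality of a quotient ZG-module M/N (N a submodule of M, with action rho):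
  some v in M whose G-orbit generates M/N, i.e. orbit(v) together with N spans M.\<close>
definition principal_quot :: "(nat \<Rightarrow> nat) set \<Rightarrow> ((nat \<Rightarrow> nat) \<Rightarrow> ('y \<Rightarrow> int) \<Rightarrow> ('y \<Rightarrow> int))
    \<Rightarrow> ('y \<Rightarrow> int) set \<Rightarrow> ('y \<Rightarrow> int) set \<Rightarrow> bool" where
  "principal_quot G rho M N \<longleftrightarrow> (\<exists>v\<in>M. zspan ({rho g v | g. g \<in> G} \<union> N) = M)"

definition principal_mod :: "(nat \<Rightarrow> nat) set \<Rightarrow> ((nat \<Rightarrow> nat) \<Rightarrow> ('y \<Rightarrow> int) \<Rightarrow> ('y \<Rightarrow> int))
    \<Rightarrow> ('y \<Rightarrow> int) set \<Rightarrow> bool" where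
  "principal_mod G rho M \<longleftrightarrow> (\<exists>v\<in>M. zspan {rho g v | g. g \<in> G} = M)"

text \<open>V_o = Z^K / Z(sum), as quotient data (M, N).\<close>
definition Vo_num :: "(nat \<Rightarrow> int) set" where "Vo_num = permmod cubes"
definition Vo_den :: "(nat \<Rightarrow> int) set" where "Vo_den = zspan {sumvec cubes}"

text \<open>E_o = \<wedge>^2 V_o = \<wedge>^2 Z^K / (s \<wedge> Z^K), s = sum of the basis (right exactness of \<wedge>^2).\<close>
definition Eo_den :: "(nat \<times> nat \<Rightarrow> int) set" where
  "Eo_den = zspan {wedge cubes (sumvec cubes) f | f. f \<in> permmod cubes}"

definition Wo_num :: "((nat \<Rightarrow> nat) set \<Rightarrow> int) set" where "Wo_num = permmod faces"
definition Wo_den :: "((nat \<Rightarrow> nat) set \<Rightarrow> int) set" where "Wo_den = zspan {sumvec faces}"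

definition W2o_den :: "((nat \<Rightarrow> nat) set \<times> (nat \<Rightarrow> nat) set \<Rightarrow> int) set" where
  "W2o_den = zspan {wedge faces (sumvec faces) f | f. f \<in> permmod faces}"

end

theory Submission
  imports Defs "HOL-Computational_Algebra.Primes" "HOL-Algebra.Multiplicative_Group"
    "HOL-Combinatorics.Multiset_Permutations"
begin

text \<open>The group A5 acts 2-transitively on the five inscribed cubes and, by conjugation, on its six
  subgroups of order 5, which stand for the pairs of opposite faces. If G acts 2-transitively on a
  finite set X, then the orbit of a basis vector e_a spans Z^X, and the orbit of e_a \<and> e_b spans
  \<wedge>^2 Z^X because the e_x \<and> e_y do. Quotients of principal modules are principal, which gives
  V_o, E_o, W_o and \<wedge>^2 W_o as well.

  The 2-transitivity is verified by computation, with group elements written as even words in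
  transpositions. To enumerate the subgroups of order 5, note that by Lagrange each of them is
  generated by any of its non-identity elements.\<close>

section \<open>Integral spans and exterior squares\<close>

lemma zspan_least:
  assumes "S \<subseteq> T" "(\<lambda>_. 0) \<in> T"
    and "\<And>a b. a \<in> T \<Longrightarrow> b \<in> T \<Longrightarrow> (\<lambda>x. a x + b x) \<in> T"
    and "\<And>a. a \<in> T \<Longrightarrow> (\<lambda>x. - a x) \<in> T"
  shows "zspan S \<subseteq> T"
proof
  fix v assume "v \<in> zspan S"
  then show "v \<in> T" by induction (use assms in blast)+
qed

lemma zspan_subset_zspan: "S \<subseteq> zspan T \<Longrightarrow> zspan S \<subseteq> zspan T"
  by (rule zspan_least[OF _ zspan.zero zspan.add zspan.neg])

lemma zspan_mono: "S \<subseteq> T \<Longrightarrow> zspan S \<subseteq> zspan T"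
  by (rule zspan_subset_zspan) (blast intro: zspan.gen)

lemma zspan_smult:
  assumes "a \<in> zspan S"
  shows "(\<lambda>x. c * a x) \<in> zspan S"
proof -
  have nat_multiple: "(\<lambda>x. int n * a x) \<in> zspan S" for n
  proof (induction n)
    case 0
    show ?case using zspan.zero by simp
  next
    case (Suc n)
    from zspan.add[OF Suc assms] show ?case by (simp add: algebra_simps)
  qed
  show ?thesis
  proof (cases "c \<ge> 0")
    case True
    with nat_multiple[of "nat c"] show ?thesis by simp
  next
    case False
    with zspan.neg[OF nat_multiple[of "nat (- c)"]] show ?thesis by simp
  qed
qed

lemma zspan_sum:
  assumes "finite I" "\<And>i. i \<in> I \<Longrightarrow> b i \<in> zspan S"
  shows "(\<lambda>x. \<Sum>i\<in>I. c i * b i x) \<in> zspan S"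
  using assms
proof (induction I rule: finite_induct)
  case empty
  show ?case using zspan.zero by simp
next
  case (insert j I)
  then have "(\<lambda>x. c j * b j x + (\<Sum>i\<in>I. c i * b i x)) \<in> zspan S"
    using zspan.add[OF zspan_smult] by force
  with insert show ?case by simp
qed

definition basis_vec :: "'x \<Rightarrow> 'x \<Rightarrow> int" where
  "basis_vec a = (\<lambda>x. if x = a then 1 else 0)"

lemma sum_basis_vec:
  assumes "finite X"
  shows "(\<Sum>y\<in>X. f y * basis_vec y x) = (if x \<in> X then f x else 0)"
proof -
  have "(\<Sum>y\<in>X. f y * basis_vec y x) = (\<Sum>y\<in>X. if y = x then f y else 0)"
    by (intro sum.cong) (auto simp: basis_vec_def)
  with assms show ?thesis by simp
qed

lemma wedge_antisym: "wedge X f g p = - wedge X g f p"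
  by (cases p) (simp add: wedge_def)

lemma wedge_expand_left:
  assumes "finite X"
  shows "wedge X f g = (\<lambda>p. \<Sum>x\<in>X. f x * wedge X (basis_vec x) g p)"
proof (intro ext, clarify)
  fix u v
  show "wedge X f g (u, v) = (\<Sum>x\<in>X. f x * wedge X (basis_vec x) g (u, v))"
  proof (cases "u \<in> X \<and> v \<in> X")
    case True
    then have "f x * wedge X (basis_vec x) g (u, v) = f x * basis_vec x u * g v - f x * basis_vec x v * g u" for x
      by (simp add: wedge_def algebra_simps)
    then have "(\<Sum>x\<in>X. f x * wedge X (basis_vec x) g (u, v))
        = (\<Sum>x\<in>X. f x * basis_vec x u) * g v - (\<Sum>x\<in>X. f x * basis_vec x v) * g u"
      by (simp add: sum_subtractf sum_distrib_right)
    also have "\<dots> = wedge X f g (u, v)"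
      using True assms by (simp add: sum_basis_vec wedge_def)
    finally show ?thesis ..
  next
    case False
    then show ?thesis by (auto simp: wedge_def)
  qed
qed

lemma wedge_expand_right:
  assumes "finite X"
  shows "wedge X f g = (\<lambda>p. \<Sum>y\<in>X. g y * wedge X f (basis_vec y) p)"
proof
  fix p
  have "wedge X f g p = - (\<Sum>y\<in>X. g y * wedge X (basis_vec y) f p)"
    using wedge_antisym[of X f g p] wedge_expand_left[OF assms, of g f] by simp
  also have "\<dots> = (\<Sum>y\<in>X. g y * wedge X f (basis_vec y) p)"
    using wedge_antisym[of X "basis_vec y" f p for y] by (simp add: sum_negf[symmetric])
  finally show "wedge X f g p = (\<Sum>y\<in>X. g y * wedge X f (basis_vec y) p)" .
qed

lemma basis_vec_in_permmod: "a \<in> X \<Longrightarrow> basis_vec a \<in> permmod X"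
  by (simp add: basis_vec_def permmod_def)

lemma sumvec_in_permmod: "sumvec X \<in> permmod X"
  by (simp add: sumvec_def permmod_def)

lemma pm_act_in_permmod: "pm_act X act g f \<in> permmod X"
  by (simp add: pm_act_def permmod_def)

lemma zspan_subset_permmod: "S \<subseteq> permmod X \<Longrightarrow> zspan S \<subseteq> permmod X"
  by (rule zspan_least) (auto simp: permmod_def)

lemma sumvec_span_subset_permmod: "zspan {sumvec X} \<subseteq> permmod X"
  by (rule zspan_subset_permmod) (simp add: sumvec_in_permmod)

lemma permmod_eq_zspan_basis:
  assumes "finite X"
  shows "permmod X = zspan {basis_vec x | x. x \<in> X}"
proof
  show "zspan {basis_vec x | x. x \<in> X} \<subseteq> permmod X"
    by (rule zspan_subset_permmod) (auto intro: basis_vec_in_permmod)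
next
  show "permmod X \<subseteq> zspan {basis_vec x | x. x \<in> X}"
  proof
    fix f assume f: "f \<in> permmod X"
    have "f = (\<lambda>p. \<Sum>x\<in>X. f x * basis_vec x p)"
      using f assms by (auto simp: fun_eq_iff sum_basis_vec permmod_def)
    also have "\<dots> \<in> zspan {basis_vec x | x. x \<in> X}"
      using assms by (intro zspan_sum) (auto intro: zspan.gen)
    finally show "f \<in> zspan {basis_vec x | x. x \<in> X}" .
  qed
qed

lemma wedge_self: "wedge X f f = (\<lambda>_. 0)"
  by (auto simp: wedge_def fun_eq_iff)

lemma wedge2_eq_zspan_basis:
  assumes "finite X"
  shows "wedge2 X = zspan {wedge X (basis_vec x) (basis_vec y) | x y. x \<in> X \<and> y \<in> X}"
  unfolding wedge2_def
proof (intro equalityI zspan_subset_zspan subsetI)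
  fix w assume "w \<in> {wedge X f g | f g. f \<in> permmod X \<and> g \<in> permmod X}"
  then obtain f g where "w = wedge X f g" by blast
  have "wedge X (basis_vec x) g \<in> zspan {wedge X (basis_vec x) (basis_vec y) | x y. x \<in> X \<and> y \<in> X}"
    if "x \<in> X" for x
    using that by (subst wedge_expand_right[OF assms]) (rule zspan_sum[OF assms]; blast intro: zspan.gen)
  with \<open>w = wedge X f g\<close> show "w \<in> zspan {wedge X (basis_vec x) (basis_vec y) | x y. x \<in> X \<and> y \<in> X}"
    using assms by (simp add: wedge_expand_left[of X f] zspan_sum)
next
  fix w assume "w \<in> {wedge X (basis_vec x) (basis_vec y) | x y. x \<in> X \<and> y \<in> X}"
  then show "w \<in> zspan {wedge X f g | f g. f \<in> permmod X \<and> g \<in> permmod X}"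
    by (blast intro: zspan.gen basis_vec_in_permmod)
qed

lemma wedge_sumvec_span_subset_wedge2: "zspan {wedge X (sumvec X) f | f. f \<in> permmod X} \<subseteq> wedge2 X"
  unfolding wedge2_def by (rule zspan_mono) (auto intro: sumvec_in_permmod)

lemma w2_act_wedge:
  assumes "f \<in> permmod X" "h \<in> permmod X"
  shows "w2_act X act g (wedge X f h) = wedge X (pm_act X act g f) (pm_act X act g h)"
  using assms by (auto simp: w2_act_def wedge_def pm_act_def permmod_def fun_eq_iff)

section \<open>Principal modules from 2-transitive actions\<close>

lemma principal_modI:
  assumes "v \<in> M" "M = zspan B" "\<And>g. g \<in> G \<Longrightarrow> rho g v \<in> M"
    and "B \<subseteq> zspan {rho g v | g. g \<in> G}"
  shows "principal_mod G rho M"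
  unfolding principal_mod_def
proof (intro bexI equalityI)
  show "zspan {rho g v | g. g \<in> G} \<subseteq> M"
    using assms(2,3) by (auto intro!: zspan_subset_zspan)
  show "M \<subseteq> zspan {rho g v | g. g \<in> G}"
    using assms(2,4) by (simp add: zspan_subset_zspan)
qed (fact assms(1))

lemma principal_quot_if_principal_mod:
  assumes "principal_mod G rho M" "N \<subseteq> M"
  shows "principal_quot G rho M N"
proof -
  obtain v where v: "v \<in> M" and span: "zspan {rho g v | g. g \<in> G} = M"
    using assms(1) by (auto simp: principal_mod_def)
  have "zspan ({rho g v | g. g \<in> G} \<union> N) = M"
  proof
    have "{rho g v | g. g \<in> G} \<union> N \<subseteq> zspan {rho g v | g. g \<in> G}"
      using span assms(2) by (auto intro: zspan.gen)
    from zspan_subset_zspan[OF this] span show "zspan ({rho g v | g. g \<in> G} \<union> N) \<subseteq> M"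
      by simp
    show "M \<subseteq> zspan ({rho g v | g. g \<in> G} \<union> N)"
      unfolding span[symmetric] by (rule zspan_mono) blast
  qed
  with v show ?thesis by (auto simp: principal_quot_def)
qed

definition two_transitive_from :: "'g set \<Rightarrow> ('g \<Rightarrow> 'x \<Rightarrow> 'x) \<Rightarrow> 'x set \<Rightarrow> 'x \<Rightarrow> 'x \<Rightarrow> bool" where
  "two_transitive_from G act X a a' \<longleftrightarrow> a \<in> X \<and> a' \<in> X \<and> a \<noteq> a' \<and>
     (\<forall>b\<in>X. \<forall>b'\<in>X. b \<noteq> b' \<longrightarrow> (\<exists>g\<in>G. act g a = b \<and> act g a' = b'))"

lemma transitive_if_two_transitive_from:
  assumes "two_transitive_from G act X a a'" "b \<in> X"
  shows "\<exists>g\<in>G. act g a = b"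
proof (cases "b = a'")
  case True
  with assms show ?thesis unfolding two_transitive_from_def by metis
next
  case False
  with assms show ?thesis unfolding two_transitive_from_def by metis
qed

locale bij_action =
  fixes G :: "(nat \<Rightarrow> nat) set" and X :: "'x set" and act :: "(nat \<Rightarrow> nat) \<Rightarrow> 'x \<Rightarrow> 'x"
  assumes act_closed: "g \<in> G \<Longrightarrow> x \<in> X \<Longrightarrow> act g x \<in> X"
    and act_inv_eq_iff: "g \<in> G \<Longrightarrow> act (Hilbert_Choice.inv g) x = y \<longleftrightarrow> x = act g y"
begin

lemma pm_act_basis_vec:
  assumes "g \<in> G" "a \<in> X"
  shows "pm_act X act g (basis_vec a) = basis_vec (act g a)"
  using assms act_closed act_inv_eq_iff by (auto simp: pm_act_def basis_vec_def fun_eq_iff)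

lemma w2_act_wedge_basis_vec:
  assumes "g \<in> G" "a \<in> X" "b \<in> X"
  shows "w2_act X act g (wedge X (basis_vec a) (basis_vec b)) = wedge X (basis_vec (act g a)) (basis_vec (act g b))"
  using assms by (simp add: w2_act_wedge basis_vec_in_permmod pm_act_basis_vec)

lemma principal_permmod:
  assumes "finite X" "a \<in> X" "\<And>b. b \<in> X \<Longrightarrow> \<exists>g\<in>G. act g a = b"
  shows "principal_mod G (pm_act X act) (permmod X)"
proof (rule principal_modI[OF basis_vec_in_permmod[OF assms(2)] permmod_eq_zspan_basis[OF assms(1)]])
  show "pm_act X act g (basis_vec a) \<in> permmod X" for g
    by (rule pm_act_in_permmod)
  show "{basis_vec x | x. x \<in> X} \<subseteq> zspan {pm_act X act g (basis_vec a) | g. g \<in> G}"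
  proof clarify
    fix b assume "b \<in> X"
    then obtain g where g: "g \<in> G" "act g a = b" using assms(3) by blast
    then have "basis_vec b = pm_act X act g (basis_vec a)"
      using assms(2) by (simp add: pm_act_basis_vec)
    with g(1) show "basis_vec b \<in> zspan {pm_act X act g (basis_vec a) | g. g \<in> G}"
      by (blast intro: zspan.gen)
  qed
qed

lemma principal_wedge2:
  assumes "finite X" "two_transitive_from G act X a a'"
  shows "principal_mod G (w2_act X act) (wedge2 X)"
proof -
  have a: "a \<in> X" "a' \<in> X" using assms(2) by (simp_all add: two_transitive_from_def)
  let ?v = "wedge X (basis_vec a) (basis_vec a')"
  show ?thesis
  proof (rule principal_modI[OF _ wedge2_eq_zspan_basis[OF assms(1)]])
    show "?v \<in> wedge2 X"
      unfolding wedge2_def using a by (blast intro: zspan.gen basis_vec_in_permmod)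
    show "w2_act X act g ?v \<in> wedge2 X" if "g \<in> G" for g
      unfolding w2_act_wedge_basis_vec[OF that a] wedge2_def using a that act_closed
      by (blast intro: zspan.gen basis_vec_in_permmod)
    show "{wedge X (basis_vec b) (basis_vec b') | b b'. b \<in> X \<and> b' \<in> X} \<subseteq> zspan {w2_act X act g ?v | g. g \<in> G}"
    proof clarify
      fix b b' assume b: "b \<in> X" "b' \<in> X"
      show "wedge X (basis_vec b) (basis_vec b') \<in> zspan {w2_act X act g ?v | g. g \<in> G}"
      proof (cases "b = b'")
        case True
        then show ?thesis by (simp add: wedge_self zspan.zero)
      next
        case False
        then obtain g where g: "g \<in> G" "act g a = b" "act g a' = b'"
          using assms(2) b by (auto simp: two_transitive_from_def)
        then have "wedge X (basis_vec b) (basis_vec b') = w2_act X act g ?v"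
          using a by (simp add: w2_act_wedge_basis_vec)
        with g(1) show ?thesis by (blast intro: zspan.gen)
      qed
    qed
  qed
qed

end

section \<open>Finite groups of permutations and the subgroups of order 5\<close>

definition comp_monoid :: "('a \<Rightarrow> 'a) set \<Rightarrow> ('a \<Rightarrow> 'a) monoid" where
  "comp_monoid H = \<lparr>carrier = H, monoid.mult = (\<circ>), one = id\<rparr>"

lemma comp_monoid_simps [simp]:
  "carrier (comp_monoid H) = H" "\<one>\<^bsub>comp_monoid H\<^esub> = id" "a \<otimes>\<^bsub>comp_monoid H\<^esub> b = a \<circ> b"
  by (simp_all add: comp_monoid_def)

lemma comp_monoid_pow [simp]: "x [^]\<^bsub>comp_monoid H\<^esub> (n::nat) = x ^^ n"
proof (induction n)
  case 0
  show ?case by simp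
next
  case (Suc n)
  have "x [^]\<^bsub>comp_monoid H\<^esub> Suc n = x [^]\<^bsub>comp_monoid H\<^esub> n \<circ> x"
    by simp
  with Suc show ?case by (simp only: funpow_Suc_right)
qed

lemma group_comp_monoid:
  assumes "finite H" "id \<in> H" "\<And>h. h \<in> H \<Longrightarrow> bij h" "\<And>a b. a \<in> H \<Longrightarrow> b \<in> H \<Longrightarrow> a \<circ> b \<in> H"
  shows "group (comp_monoid H)"
proof (rule groupI)
  fix x assume "x \<in> carrier (comp_monoid H)"
  then have x: "x \<in> H" by simp
  have "inj_on (\<lambda>y. y \<circ> x) H"
    using bij_is_surj[OF assms(3)[OF x]] by (auto intro!: inj_onI simp: fun_eq_iff surj_def) metis
  moreover have "(\<lambda>y. y \<circ> x) ` H \<subseteq> H" using assms(4) x by blast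
  ultimately have "(\<lambda>y. y \<circ> x) ` H = H" by (intro endo_inj_surj[OF assms(1)])
  then obtain y where "y \<in> H" "y \<circ> x = id" using assms(2) by (metis imageE)
  then show "\<exists>y\<in>carrier (comp_monoid H). y \<otimes>\<^bsub>comp_monoid H\<^esub> x = \<one>\<^bsub>comp_monoid H\<^esub>"
    by auto
qed (auto simp: assms(2,4) comp_assoc)

lemma (in group) ord_eq_prime:
  assumes "a \<in> carrier G" "a \<noteq> \<one>" "prime p" "a [^] p = \<one>"
  shows "ord a = p"
proof -
  have "ord a dvd p" using assms(1,4) pow_eq_id by blast
  moreover have "ord a \<noteq> 1" using assms(1,2) ord_eq_1 by blast
  ultimately show ?thesis using assms(3) prime_nat_iff by blast
qed

lemma comp_monoid_powers_inj:
  assumes "group (comp_monoid H)" "h \<in> H" "h \<noteq> id" "prime p" "h ^^ p = id"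
  shows "inj_on (\<lambda>k. h ^^ k) {..<p}"
proof -
  interpret group "comp_monoid H" by (fact assms(1))
  have "ord h = p"
    using assms by (intro ord_eq_prime) simp_all
  moreover have "{0..p - 1} = {..<p}" using prime_gt_0_nat[OF assms(4)] by auto
  moreover have "(\<lambda>k. h [^]\<^bsub>comp_monoid H\<^esub> k) = (\<lambda>k. h ^^ k)" by simp
  ultimately show ?thesis using ord_inj[of h] assms(2) by simp
qed

lemma Ico_bij: "g \<in> Ico \<Longrightarrow> bij g"
  by (auto simp: Ico_def intro: permutes_bij)

lemma Ico_fixes: "g \<in> Ico \<Longrightarrow> 5 \<le> x \<Longrightarrow> g x = x"
  by (auto simp: Ico_def cubes_def intro: permutes_not_in)

lemma id_in_Ico: "id \<in> Ico"
  by (simp add: Ico_def permutes_id)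

lemma permutation_if_in_Ico: "a \<in> Ico \<Longrightarrow> permutation a"
  by (auto simp: Ico_def cubes_def intro: permutes_imp_permutation)

lemma Ico_comp: "a \<in> Ico \<Longrightarrow> b \<in> Ico \<Longrightarrow> a \<circ> b \<in> Ico"
  using permutation_if_in_Ico by (auto simp: Ico_def permutes_compose evenperm_comp)

lemma Ico_inv: "a \<in> Ico \<Longrightarrow> Hilbert_Choice.inv a \<in> Ico"
  using permutation_if_in_Ico by (auto simp: Ico_def permutes_inv evenperm_inv)

lemma Ico_funpow: "a \<in> Ico \<Longrightarrow> a ^^ k \<in> Ico"
  by (induction k) (simp_all add: id_in_Ico Ico_comp)

lemma face_eq_powers:
  assumes "H \<in> faces" "h \<in> H" "h \<noteq> id"
  shows "h ^^ 5 = id" "H = (\<lambda>k. h ^^ k) ` {..<5}"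
proof -
  have H: "H \<subseteq> Ico" "card H = 5" "id \<in> H" "\<And>a b. a \<in> H \<Longrightarrow> b \<in> H \<Longrightarrow> a \<circ> b \<in> H"
    using assms(1) by (auto simp: faces_def)
  then have fin: "finite H" by (intro card_ge_0_finite) simp
  have grp: "group (comp_monoid H)"
    using H fin Ico_bij by (intro group_comp_monoid) auto
  have "h [^]\<^bsub>comp_monoid H\<^esub> order (comp_monoid H) = \<one>\<^bsub>comp_monoid H\<^esub>"
    using assms(2) by (intro group.pow_order_eq_1[OF grp]) simp
  moreover have "order (comp_monoid H) = 5" by (simp add: order_def H(2))
  ultimately show h5: "h ^^ 5 = id" by simp
  have "(\<lambda>k. h ^^ k) ` {..<5} \<subseteq> H"
    using monoid.nat_pow_closed[OF group.is_monoid[OF grp], of h] assms(2) by auto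
  moreover have "card ((\<lambda>k. h ^^ k) ` {..<5}) = card H"
    using comp_monoid_powers_inj[OF grp assms(2,3) _ h5] H(2) by (simp add: card_image)
  ultimately show "H = (\<lambda>k. h ^^ k) ` {..<5}"
    using fin by (intro card_subset_eq[symmetric])
qed

lemma powers_in_faces:
  assumes "h \<in> Ico" "h ^^ 5 = id" "h \<noteq> id"
  shows "(\<lambda>k. h ^^ k) ` {..<5} \<in> faces"
proof -
  let ?P = "(\<lambda>k. h ^^ k) ` {..<5}"
  have pow_mod: "h ^^ n = h ^^ (n mod 5)" for n
    using funpow_mod_eq[where f = h and n = 5 and m = n] assms(2) by (simp add: fun_eq_iff)
  have closed: "a \<circ> b \<in> ?P" if a: "a \<in> ?P" and b: "b \<in> ?P" for a b
  proof -
    obtain i j where "a = h ^^ i" "b = h ^^ j" using a b by blast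
    then have "a \<circ> b = h ^^ ((i + j) mod 5)" by (simp only: pow_mod[symmetric] funpow_add)
    then show ?thesis by simp
  qed
  have id: "id \<in> ?P" by (force intro: image_eqI[of _ _ 0])
  have sub: "?P \<subseteq> Ico" using Ico_funpow assms(1) by blast
  have grp: "group (comp_monoid ?P)"
    using closed id sub Ico_bij by (intro group_comp_monoid) auto
  have "h \<in> ?P" by (force intro: image_eqI[of _ _ 1])
  from comp_monoid_powers_inj[OF grp this assms(3) _ assms(2)]
  have "card ?P = 5" by (simp add: card_image)
  with closed id sub show ?thesis by (auto simp: faces_def)
qed

lemma conj_funpow:
  assumes "bij g"
  shows "(g \<circ> h \<circ> Hilbert_Choice.inv g) ^^ k = g \<circ> h ^^ k \<circ> Hilbert_Choice.inv g"
proof (induction k)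
  case 0
  show ?case using assms by (simp add: fun_eq_iff bij_is_surj surj_f_inv_f)
next
  case (Suc k)
  have "(g \<circ> h \<circ> Hilbert_Choice.inv g) ^^ Suc k = (g \<circ> h \<circ> Hilbert_Choice.inv g) \<circ> (g \<circ> h ^^ k \<circ> Hilbert_Choice.inv g)"
    using Suc.IH by (simp only: funpow.simps)
  also have "\<dots> = g \<circ> h ^^ Suc k \<circ> Hilbert_Choice.inv g"
    using assms by (simp add: fun_eq_iff bij_is_inj)
  finally show ?case .
qed

lemma act_L_powers:
  assumes "bij g"
  shows "act_L g ((\<lambda>k. h ^^ k) ` K) = (\<lambda>k. (g \<circ> h \<circ> Hilbert_Choice.inv g) ^^ k) ` K"
  by (simp add: act_L_def image_image conj_funpow[OF assms])

lemma act_L_in_faces: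
  assumes "g \<in> Ico" "H \<in> faces"
  shows "act_L g H \<in> faces"
proof -
  have "H \<noteq> {id}" "H \<noteq> {}" using assms(2) by (auto simp: faces_def)
  then obtain h where h: "h \<in> H" "h \<noteq> id" by blast
  let ?h' = "g \<circ> h \<circ> Hilbert_Choice.inv g"
  have g: "bij g" "g \<in> Ico" "Hilbert_Choice.inv g \<in> Ico" using assms(1) by (simp_all add: Ico_bij Ico_inv)
  then have g_inv: "g \<circ> Hilbert_Choice.inv g = id" "Hilbert_Choice.inv g \<circ> g = id"
    by (simp_all add: fun_eq_iff bij_is_surj surj_f_inv_f bij_is_inj)
  have "h \<in> Ico" using assms(2) h(1) by (auto simp: faces_def)
  then have "?h' \<in> Ico" using g by (simp add: Ico_comp)
  moreover have "?h' ^^ 5 = id"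
    using face_eq_powers(1)[OF assms(2) h] conj_funpow[OF g(1), where h = h and k = 5] g_inv by simp
  moreover have "?h' \<noteq> id"
  proof
    assume "?h' = id"
    then have "Hilbert_Choice.inv g \<circ> ?h' \<circ> g = h"
      using g_inv by (simp add: comp_assoc) (metis comp_assoc comp_id id_comp)
    with \<open>?h' = id\<close> h(2) g_inv show False by simp
  qed
  ultimately have "(\<lambda>k. ?h' ^^ k) ` {..<5} \<in> faces" by (rule powers_in_faces)
  then show ?thesis
    using face_eq_powers(2)[OF assms(2) h] act_L_powers[OF g(1)] by simp
qed

lemma act_L_inv_eq_iff:
  assumes "bij g"
  shows "act_L (Hilbert_Choice.inv g) A = B \<longleftrightarrow> A = act_L g B"
proof -
  have "g (Hilbert_Choice.inv g x) = x" "Hilbert_Choice.inv g (g x) = x" for x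
    using assms by (simp_all add: bij_is_surj surj_f_inv_f bij_is_inj)
  then have "act_L g (act_L (Hilbert_Choice.inv g) A) = A" "act_L (Hilbert_Choice.inv g) (act_L g B) = B"
    using assms by (simp_all add: act_L_def image_image comp_def inv_inv_eq)
  then show ?thesis by metis
qed

lemma bij_action_cubes: "bij_action Ico cubes act_K"
  by unfold_locales (auto simp: act_K_def Ico_def permutes_in_image permutes_inverses)

lemma bij_action_faces: "bij_action Ico faces act_L"
  by unfold_locales (simp_all add: act_L_in_faces act_L_inv_eq_iff Ico_bij)

section \<open>Explicit elements of A5\<close>

definition perm_of_list :: "nat list \<Rightarrow> nat \<Rightarrow> nat" where
  "perm_of_list xs i = (if i < length xs then xs ! i else i)"

definition list_of_perm :: "(nat \<Rightarrow> nat) \<Rightarrow> nat list" where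
  "list_of_perm f = map f [0..<5]"

lemma perm_of_list_upt: "perm_of_list [0..<n] = id"
  by (simp add: fun_eq_iff perm_of_list_def)

lemma perm_of_list_fixes: "length xs \<le> x \<Longrightarrow> perm_of_list xs x = x"
  by (simp add: perm_of_list_def)

lemma perm_of_list_of_perm:
  assumes "\<And>x. 5 \<le> x \<Longrightarrow> f x = x"
  shows "perm_of_list (list_of_perm f) = f"
  using assms by (auto simp: fun_eq_iff perm_of_list_def list_of_perm_def)

lemma list_of_perm_of_list: "length xs = 5 \<Longrightarrow> list_of_perm (perm_of_list xs) = xs"
  by (simp add: list_of_perm_def perm_of_list_def list_eq_iff_nth_eq)

lemma perm_of_list_funpow_fixes: "length xs \<le> x \<Longrightarrow> (perm_of_list xs ^^ k) x = x"
  by (induction k) (simp_all add: perm_of_list_fixes)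

fun prod_swaps :: "(nat \<times> nat) list \<Rightarrow> nat \<Rightarrow> nat" where
  "prod_swaps [] = id"
| "prod_swaps ((a, b) # w) = transpose a b \<circ> prod_swaps w"

lemma prod_swaps_append: "prod_swaps (v @ w) = prod_swaps v \<circ> prod_swaps w"
  by (induction v rule: prod_swaps.induct) (simp_all add: comp_assoc)

lemma inv_prod_swaps: "Hilbert_Choice.inv (prod_swaps w) = prod_swaps (rev w)"
proof -
  have cancel: "prod_swaps w \<circ> prod_swaps (rev w) = id" for w
  proof (induction w rule: prod_swaps.induct)
    case (2 a b w)
    have "prod_swaps ((a, b) # w) \<circ> prod_swaps (rev ((a, b) # w))
        = transpose a b \<circ> (prod_swaps w \<circ> prod_swaps (rev w)) \<circ> transpose a b"
      by (simp add: prod_swaps_append comp_assoc)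
    also have "\<dots> = id" by (simp only: 2 o_id transpose_comp_involutory)
    finally show ?case .
  qed simp
  from cancel[of w] cancel[of "rev w"] show ?thesis by (intro inv_unique_comp) simp_all
qed

lemma prod_swaps_permutes_evenperm:
  assumes "\<forall>(a, b) \<in> set w. a < 5 \<and> b < 5 \<and> a \<noteq> b"
  shows "prod_swaps w permutes cubes \<and> evenperm (prod_swaps w) = even (length w)"
  using assms
proof (induction w rule: prod_swaps.induct)
  case 1
  show ?case by (simp only: prod_swaps.simps permutes_id evenperm_id) simp
next
  case (2 a b w)
  then have ab: "transpose a b permutes cubes" "a \<noteq> b" by (auto simp: cubes_def intro: permutes_swap_id)
  moreover have "prod_swaps w permutes cubes" "evenperm (prod_swaps w) = even (length w)" using 2 by simp_all
  moreover have "permutation (prod_swaps w)"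
    using \<open>prod_swaps w permutes cubes\<close> by (auto simp: cubes_def intro: permutes_imp_permutation)
  ultimately show ?case
    using permutes_compose[of "prod_swaps w" cubes "transpose a b"]
      evenperm_comp[OF permutation_swap_id, of "prod_swaps w" a b]
    by (simp only: prod_swaps.simps evenperm_swap length_Cons even_Suc) simp
qed

lemma prod_swaps_in_Ico:
  assumes "\<forall>(a, b) \<in> set w. a < 5 \<and> b < 5 \<and> a \<noteq> b" "even (length w)"
  shows "prod_swaps w \<in> Ico"
  using prod_swaps_permutes_evenperm[OF assms(1)] assms(2) by (simp add: Ico_def)

definition swaps :: "(nat \<times> nat) list" where
  "swaps = [(a, b). b \<leftarrow> [0..<5], a \<leftarrow> [0..<b]]"

text \<open>Products of two distinct transpositions give the 3-cycles and the double transpositions, and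
  (0 a)(0 b)(0 c)(0 d) runs through the 5-cycles, so every non-identity element of A5 occurs; the
  searches over this list below rely on this.\<close>
definition A5_words :: "(nat \<times> nat) list list" where
  "A5_words = [[swaps ! i, swaps ! j]. j \<leftarrow> [0..<10], i \<leftarrow> [0..<j]]
     @ map (map (Pair 0)) (permutations_of_set_list [1, 2, 3, 4])"

lemma A5_words_valid:
  "list_all (\<lambda>w. even (length w) \<and> list_all (\<lambda>(a, b). a < 5 \<and> b < 5 \<and> a \<noteq> b) w) A5_words"
  by code_simp

lemma A5_words_in_Ico: "w \<in> set A5_words \<Longrightarrow> prod_swaps w \<in> Ico"
  using A5_words_valid by (auto simp: list_all_iff intro!: prod_swaps_in_Ico)

lemma A5_words_cube_pairs:
  "set [(i, j). i \<leftarrow> [0..<5], j \<leftarrow> [0..<5], i \<noteq> j] \<subseteq> set (map (\<lambda>w. (prod_swaps w 0, prod_swaps w 1)) A5_words)"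
  by code_simp

lemma two_transitive_cubes: "two_transitive_from Ico act_K cubes 0 1"
  unfolding two_transitive_from_def
proof (intro conjI ballI impI)
  fix i j :: nat assume "i \<in> cubes" "j \<in> cubes" "i \<noteq> j"
  then have "(i, j) \<in> set [(i, j). i \<leftarrow> [0..<5], j \<leftarrow> [0..<5], i \<noteq> j]" by (auto simp: cubes_def)
  then have "(i, j) \<in> set (map (\<lambda>w. (prod_swaps w 0, prod_swaps w 1)) A5_words)"
    using A5_words_cube_pairs by blast
  then obtain w where "w \<in> set A5_words" "prod_swaps w 0 = i" "prod_swaps w 1 = j"
    by (auto simp del: One_nat_def)
  then show "\<exists>g\<in>Ico. act_K g 0 = i \<and> act_K g 1 = j"
    using A5_words_in_Ico by (auto simp: act_K_def)
qed (simp_all add: cubes_def)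

section \<open>The six subgroups of order 5\<close>

text \<open>One generator of each of the six subgroups of order 5 of A5, normalised to send 0 to 1.\<close>
definition face_gens :: "nat list list" where
  "face_gens = [[1,2,3,4,0], [1,2,4,0,3], [1,3,0,4,2], [1,3,4,2,0], [1,4,0,2,3], [1,4,3,0,2]]"

definition face :: "nat \<Rightarrow> (nat \<Rightarrow> nat) set" where
  "face j = (\<lambda>k. perm_of_list (face_gens ! j) ^^ k) ` {..<5}"

definition order_5 :: "nat list \<Rightarrow> bool" where
  "order_5 xs \<longleftrightarrow> xs \<noteq> [0..<5] \<and> list_of_perm (perm_of_list xs ^^ 5) = [0..<5]"

definition powers_list :: "nat list \<Rightarrow> nat list list" where
  "powers_list c = map (\<lambda>k. list_of_perm (perm_of_list c ^^ k)) [0..<5]"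

definition face_index :: "nat list \<Rightarrow> nat list" where
  "face_index c = filter (\<lambda>j. face_gens ! j \<in> set (powers_list c)) [0..<6]"

definition conj_list :: "(nat \<times> nat) list \<Rightarrow> nat list \<Rightarrow> nat list" where
  "conj_list w c = list_of_perm (prod_swaps w \<circ> perm_of_list c \<circ> prod_swaps (rev w))"

text \<open>A constant rather than a lambda inside the check below, so that code_simp only unfolds it
  on concrete words.\<close>
definition face_pair_indices :: "(nat \<times> nat) list \<Rightarrow> (nat \<times> nat) list" where
  "face_pair_indices w =
     List.product (face_index (conj_list w (face_gens ! 0))) (face_index (conj_list w (face_gens ! 1)))"

lemma face_gens_facts:
  "length face_gens = 6" "list_all (\<lambda>c. length c = 5) face_gens" "list_all order_5 face_gens"
  "set face_gens \<subseteq> set (map (list_of_perm \<circ> prod_swaps) A5_words)"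
  "map face_index face_gens = map (\<lambda>j. [j]) [0..<6]"
  by code_simp+

lemma order_5_elements_in_listed_faces:
  "[] \<notin> set (map face_index (filter order_5 (permutations_of_set_list [0..<5])))"
  by code_simp

lemma A5_words_face_pairs:
  "set [(i, j). i \<leftarrow> [0..<6], j \<leftarrow> [0..<6], i \<noteq> j] \<subseteq> set (concat (map face_pair_indices A5_words))"
  by code_simp

lemma order_5_perm_of_list:
  assumes "order_5 xs" "length xs = 5"
  shows "perm_of_list xs ^^ 5 = id" "perm_of_list xs \<noteq> id"
proof -
  have "perm_of_list xs ^^ 5 = perm_of_list (list_of_perm (perm_of_list xs ^^ 5))"
    using assms(2) by (simp add: perm_of_list_of_perm perm_of_list_funpow_fixes)
  also have "\<dots> = id"
    using assms(1) by (simp add: order_5_def perm_of_list_def fun_eq_iff)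
  finally show "perm_of_list xs ^^ 5 = id" .
  show "perm_of_list xs \<noteq> id"
  proof
    assume "perm_of_list xs = id"
    then have "xs = list_of_perm id" using assms(2) by (metis list_of_perm_of_list)
    with assms(1) show False by (simp add: order_5_def list_of_perm_def)
  qed
qed

lemma face_gen:
  assumes "j < 6"
  shows "length (face_gens ! j) = 5" "order_5 (face_gens ! j)" "perm_of_list (face_gens ! j) \<in> Ico"
proof -
  have mem: "face_gens ! j \<in> set face_gens" using assms face_gens_facts(1) by simp
  then show len: "length (face_gens ! j) = 5" and "order_5 (face_gens ! j)"
    using face_gens_facts(2,3) by (simp_all add: list_all_iff)
  from mem face_gens_facts(4) obtain w where w: "w \<in> set A5_words" "face_gens ! j = list_of_perm (prod_swaps w)"
    by auto
  have "perm_of_list (face_gens ! j) = prod_swaps w"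
    using w A5_words_in_Ico by (simp add: perm_of_list_of_perm Ico_fixes)
  with w(1) show "perm_of_list (face_gens ! j) \<in> Ico" by (simp add: A5_words_in_Ico)
qed

lemma face_in_faces: "j < 6 \<Longrightarrow> face j \<in> faces"
  unfolding face_def using face_gen order_5_perm_of_list by (intro powers_in_faces) simp_all

lemma face_eq_if_gen_mem:
  assumes "H \<in> faces" "j < 6" "perm_of_list (face_gens ! j) \<in> H"
  shows "H = face j"
  using face_eq_powers(2)[OF assms(1,3)] order_5_perm_of_list(2) face_gen[OF assms(2)]
  by (simp add: face_def)

lemma mem_face_index:
  assumes "j \<in> set (face_index c)" "length c = 5"
  shows "j < 6" "perm_of_list (face_gens ! j) \<in> (\<lambda>k. perm_of_list c ^^ k) ` {..<5}"
proof -
  show "j < 6" using assms(1) by (simp add: face_index_def)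
  from assms(1) obtain k where "k < 5" "face_gens ! j = list_of_perm (perm_of_list c ^^ k)"
    by (auto simp: face_index_def powers_list_def)
  then show "perm_of_list (face_gens ! j) \<in> (\<lambda>k. perm_of_list c ^^ k) ` {..<5}"
    using assms(2) by (simp add: perm_of_list_of_perm perm_of_list_funpow_fixes)
qed

lemma face_index_face_gen: "i < 6 \<Longrightarrow> face_index (face_gens ! i) = [i]"
  using arg_cong[OF face_gens_facts(5), of "\<lambda>xs. xs ! i"] face_gens_facts(1) by simp

lemma face_inj:
  assumes "i < 6" "j < 6" "face i = face j"
  shows "i = j"
proof -
  have "perm_of_list (face_gens ! j) \<in> face j" unfolding face_def by (force intro: image_eqI[of _ _ 1])
  then obtain k where "k < 5" "perm_of_list (face_gens ! j) = perm_of_list (face_gens ! i) ^^ k"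
    using assms(3) by (auto simp: face_def)
  moreover have "face_gens ! j = list_of_perm (perm_of_list (face_gens ! j))"
    using face_gen(1)[OF assms(2)] by (simp add: list_of_perm_of_list)
  ultimately have "face_gens ! j \<in> set (powers_list (face_gens ! i))"
    unfolding powers_list_def by (auto intro: image_eqI[of _ _ k])
  then have "j \<in> set (face_index (face_gens ! i))" using assms(2) by (simp add: face_index_def)
  then show ?thesis using face_index_face_gen[OF assms(1)] by simp
qed

lemma faces_eq: "faces = face ` {..<6}"
proof (intro equalityI subsetI)
  fix H assume H: "H \<in> faces"
  then have "H \<noteq> {id}" "H \<noteq> {}" by (auto simp: faces_def)
  then obtain h where h: "h \<in> H" "h \<noteq> id" by blast
  then have "h \<in> Ico" using H by (auto simp: faces_def)
  define xs where "xs = list_of_perm h"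
  have h_xs: "perm_of_list xs = h" unfolding xs_def using \<open>h \<in> Ico\<close> by (simp add: perm_of_list_of_perm Ico_fixes)
  have "h permutes {0..<5}" using \<open>h \<in> Ico\<close> by (simp add: Ico_def cubes_def)
  then have "xs \<in> permutations_of_set (set [0..<5])"
    by (auto simp: xs_def list_of_perm_def permutes_image distinct_map permutes_inj_on)
  then have "xs \<in> set (permutations_of_set_list [0..<5])"
    by (simp only: permutations_of_list) simp
  moreover have "order_5 xs"
  proof -
    have "xs \<noteq> [0..<5]" using h(2) h_xs perm_of_list_upt by auto
    moreover have "list_of_perm (perm_of_list xs ^^ 5) = [0..<5]"
      using face_eq_powers(1)[OF H h] h_xs by (simp add: list_of_perm_def)
    ultimately show ?thesis by (simp add: order_5_def)
  qed
  ultimately have "face_index xs \<noteq> []" using order_5_elements_in_listed_faces by force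
  then obtain j where j: "j \<in> set (face_index xs)" by (meson last_in_set)
  have "length xs = 5" by (simp add: xs_def list_of_perm_def)
  with j have "j < 6" "perm_of_list (face_gens ! j) \<in> H"
    using mem_face_index[of j xs] face_eq_powers(2)[OF H h] h_xs by simp_all
  then show "H \<in> face ` {..<6}" using face_eq_if_gen_mem[OF H] by blast
qed (auto intro: face_in_faces)

lemma act_L_face_eq:
  assumes "w \<in> set A5_words" "m < 6" "i \<in> set (face_index (conj_list w (face_gens ! m)))"
  shows "act_L (prod_swaps w) (face m) = face i"
proof -
  let ?g = "prod_swaps w" and ?c = "perm_of_list (face_gens ! m)"
  have g: "?g \<in> Ico" "bij ?g" using assms(1) by (simp_all add: A5_words_in_Ico Ico_bij)
  have "?g \<circ> ?c \<circ> Hilbert_Choice.inv ?g \<in> Ico"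
    using g face_gen(3)[OF assms(2)] by (simp add: Ico_comp Ico_inv)
  then have "perm_of_list (list_of_perm (?g \<circ> ?c \<circ> Hilbert_Choice.inv ?g)) = ?g \<circ> ?c \<circ> Hilbert_Choice.inv ?g"
    by (intro perm_of_list_of_perm Ico_fixes)
  then have conj: "?g \<circ> ?c \<circ> Hilbert_Choice.inv ?g = perm_of_list (conj_list w (face_gens ! m))"
    by (simp add: conj_list_def inv_prod_swaps)
  have "act_L ?g (face m) = (\<lambda>k. perm_of_list (conj_list w (face_gens ! m)) ^^ k) ` {..<5}"
    unfolding face_def act_L_powers[OF g(2)] conj ..
  moreover have "act_L ?g (face m) \<in> faces"
    using g(1) face_in_faces[OF assms(2)] by (rule act_L_in_faces)
  ultimately show ?thesis
    using mem_face_index[OF assms(3)] face_eq_if_gen_mem by (simp add: conj_list_def list_of_perm_def)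
qed

lemma two_transitive_faces: "two_transitive_from Ico act_L faces (face 0) (face 1)"
  unfolding two_transitive_from_def
proof (intro conjI ballI impI)
  fix F F' assume "F \<in> faces" "F' \<in> faces" "F \<noteq> F'"
  then obtain i j where ij: "i < 6" "j < 6" "F = face i" "F' = face j" "i \<noteq> j"
    unfolding faces_eq by blast
  then have "(i, j) \<in> set [(i, j). i \<leftarrow> [0..<6], j \<leftarrow> [0..<6], i \<noteq> j]" by simp
  then have "(i, j) \<in> set (concat (map face_pair_indices A5_words))"
    using A5_words_face_pairs by blast
  then obtain w where w: "w \<in> set A5_words" "i \<in> set (face_index (conj_list w (face_gens ! 0)))"
      "j \<in> set (face_index (conj_list w (face_gens ! 1)))"
    by (auto simp: face_pair_indices_def)
  then have "act_L (prod_swaps w) (face 0) = F" "act_L (prod_swaps w) (face 1) = F'"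
    using ij(3,4) act_L_face_eq[OF w(1)] by simp_all
  with A5_words_in_Ico[OF w(1)] show "\<exists>g\<in>Ico. act_L g (face 0) = F \<and> act_L g (face 1) = F'"
    by blast
qed (use face_in_faces face_inj[of 0 1] in auto)

theorem proposition2p5:
  shows "principal_quot Ico (pm_act cubes act_K) Vo_num Vo_den
       \<and> principal_mod Ico (w2_act cubes act_K) (wedge2 cubes)
       \<and> principal_quot Ico (w2_act cubes act_K) (wedge2 cubes) Eo_den
       \<and> principal_quot Ico (pm_act faces act_L) Wo_num Wo_den
       \<and> principal_quot Ico (w2_act faces act_L) (wedge2 faces) W2o_den"
proof -
  interpret K: bij_action Ico cubes act_K by (rule bij_action_cubes)
  interpret L: bij_action Ico faces act_L by (rule bij_action_faces)
  have fin: "finite cubes" "finite faces" by (simp_all add: cubes_def faces_eq)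
  have "principal_mod Ico (pm_act cubes act_K) (permmod cubes)"
    by (rule K.principal_permmod[OF fin(1) _ transitive_if_two_transitive_from[OF two_transitive_cubes]])
      (simp add: cubes_def)
  moreover have "principal_mod Ico (pm_act faces act_L) (permmod faces)"
    by (rule L.principal_permmod[OF fin(2) face_in_faces transitive_if_two_transitive_from[OF two_transitive_faces]])
      simp
  moreover have "principal_mod Ico (w2_act cubes act_K) (wedge2 cubes)"
    by (rule K.principal_wedge2[OF fin(1) two_transitive_cubes])
  moreover have "principal_mod Ico (w2_act faces act_L) (wedge2 faces)"
    by (rule L.principal_wedge2[OF fin(2) two_transitive_faces])
  ultimately show ?thesis
    unfolding Vo_num_def Vo_den_def Eo_den_def Wo_num_def Wo_den_def W2o_den_def
    by (simp add: principal_quot_if_principal_mod sumvec_span_subset_permmod wedge_sumvec_span_subset_wedge2)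
qed

end
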